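(* Let $0<T\le\infty$ and let $\varphi:[0,1]\times[0,T)\to\mathbb{R}$ be a smooth solution of $$\begin{cases}\varphi_t+r\varphi_r=\varphi_{rr}+\frac{\varphi_r}{r}-\frac{\sin(2\varphi)}{2r^2}, & 0<r<1,\\ \varphi(r,0)=\varphi_0(r), & 0<r<1,\\ \varphi(0,t)=0,\ \varphi(1,t)=\varphi_0(1), & t>0,\end{cases}$$ where $\varphi_0(0)=0$ and $-\pi\le\varphi_0(r)\le\pi$ for all $r\in[0,1]$. Then $-\pi<\varphi(r,t)<\pi$ for all $r\in(0,1)$ and $t\in(0,T)$. *)

theory Defs
  imports "HOL-Analysis.Analysis" "HOL-Library.Extended_Real"
begin

fun Ck_on :: "nat \<Rightarrow> (real \<times> real) set \<Rightarrow> (real \<times> real \<Rightarrow> real) \<Rightarrow> bool" where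
  "Ck_on 0 U f = continuous_on U f"
| "Ck_on (Suc k) U f =
     (\<exists>fx fy. (\<forall>p\<in>U. (f has_derivative (\<lambda>h. fst h * fx p + snd h * fy p)) (at p))
             \<and> Ck_on k U fx \<and> Ck_on k U fy)"

definition smooth_open_on :: "(real \<times> real) set \<Rightarrow> (real \<times> real \<Rightarrow> real) \<Rightarrow> bool" where
  "smooth_open_on U f \<longleftrightarrow> open U \<and> (\<forall>k. Ck_on k U f)"

text \<open>Smoothness on an arbitrary (e.g. non-open) set D: the restriction to D of a
  smooth function defined on an open neighbourhood of D.\<close>
definition smooth_on2 :: "(real \<times> real) set \<Rightarrow> (real \<Rightarrow> real \<Rightarrow> real) \<Rightarrow> bool" where
  "smooth_on2 D \<phi> \<longleftrightarrow> (\<exists>U g. D \<subseteq> U \<and> smooth_open_on U g \<and> (\<forall>p\<in>D. g p = \<phi> (fst p) (snd p)))"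

end

(*
  On the strip r \<ge> \<alpha> > 0 the reaction term sin (2 \<phi>) / (2 r^2) is Lipschitz in \<phi> with
  constant 1 / \<alpha>^2, so the weak maximum principle applied to exp (-K t) (\<pi> - \<phi>) gives
  \<phi> \<le> \<pi> as soon as \<phi> \<le> \<pi> on r = \<alpha>; by uniform continuity and \<phi>(0, t) = 0 one may take
  \<alpha> so small that even \<phi> \<le> \<pi>/2 there. For the strict inequality, compare \<pi> - \<phi> with the
  barrier A (exp (-\<kappa> r + \<mu> t) - exp (-\<kappa> + \<mu> \<tau>)): it is \<le> 0 at t = 0 and at r = 1,
  at most \<pi>/2 at r = \<alpha>, positive at every (r, \<tau>) with r < 1, and where 0 \<le> \<pi> - \<phi> lies below
  it, sin x \<le> x turns the equation into a strict supersolution inequality. The lower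
  bound is the upper bound for -\<phi>, which solves the same equation.
*)

theory Submission
  imports Defs
begin

lemma deriv2_nonneg_at_interior_min:
  fixes f f' :: "real \<Rightarrow> real"
  assumes f': "\<And>x. a < x \<Longrightarrow> x < b \<Longrightarrow> (f has_real_derivative f' x) (at x)"
    and f'': "(f' has_real_derivative f'') (at x0)"
    and x0: "a < x0" "x0 < b"
    and min: "\<And>x. a < x \<Longrightarrow> x < b \<Longrightarrow> f x0 \<le> f x"
  shows "0 \<le> f''"
proof (rule ccontr)
  assume "\<not> 0 \<le> f''"
  then obtain e where e: "0 < e" and decreasing: "\<And>h. 0 < h \<Longrightarrow> h < e \<Longrightarrow> f' x0 < f' (x0 - h)"
    using DERIV_neg_dec_left[OF f''] by force
  have "f' x0 = 0"
    by (rule DERIV_local_min[OF f'[OF x0], of "min (x0 - a) (b - x0)"])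
       (use x0 min in \<open>auto simp: abs_if split: if_splits\<close>)
  define h where "h = min e (x0 - a) / 2"
  have h: "0 < h" "h < e" "a < x0 - h" using e x0 by (auto simp: h_def min_def field_simps)
  obtain z where z: "x0 - h < z" "z < x0" "f x0 - f (x0 - h) = h * f' z"
    using MVT2[of "x0 - h" x0 f f'] h x0 f' by force
  have "0 < f' z" using decreasing[of "x0 - z"] z h \<open>f' x0 = 0\<close> by auto
  with z h have "f (x0 - h) < f x0"
    by (metis diff_gt_0_iff_gt mult_pos_pos)
  with min[of "x0 - h"] h x0 show False by linarith
qed

lemma deriv_nonpos_at_left_min:
  fixes f :: "real \<Rightarrow> real"
  assumes "(f has_real_derivative D) (at t)"
    and "a < t" "\<And>s. a < s \<Longrightarrow> s < t \<Longrightarrow> f t \<le> f s"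
  shows "D \<le> 0"
proof (rule ccontr)
  assume "\<not> D \<le> 0"
  then obtain e where e: "0 < e" and increasing: "\<And>h. 0 < h \<Longrightarrow> h < e \<Longrightarrow> f (t - h) < f t"
    using DERIV_pos_inc_left[OF assms(1)] by force
  define h where "h = min e (t - a) / 2"
  have h: "0 < h" "h < e" "a < t - h"
    using e assms(2) by (auto simp: h_def min_def field_simps)
  with increasing assms(3)[of "t - h"] show False by fastforce
qed

lemma parabolic_minimum_principle:
  fixes y yr yrr yt c :: "real \<Rightarrow> real \<Rightarrow> real"
  assumes cont: "continuous_on ({a..b} \<times> {0..\<tau>}) (\<lambda>p. y (fst p) (snd p))"
    and initial: "\<And>r. a \<le> r \<Longrightarrow> r \<le> b \<Longrightarrow> 0 \<le> y r 0"
    and left: "\<And>t. 0 \<le> t \<Longrightarrow> t \<le> \<tau> \<Longrightarrow> 0 \<le> y a t"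
    and right: "\<And>t. 0 \<le> t \<Longrightarrow> t \<le> \<tau> \<Longrightarrow> 0 \<le> y b t"
    and yr: "\<And>r t. a < r \<Longrightarrow> r < b \<Longrightarrow> 0 < t \<Longrightarrow> t \<le> \<tau> \<Longrightarrow>
      ((\<lambda>x. y x t) has_real_derivative yr r t) (at r)"
    and yrr: "\<And>r t. a < r \<Longrightarrow> r < b \<Longrightarrow> 0 < t \<Longrightarrow> t \<le> \<tau> \<Longrightarrow>
      ((\<lambda>x. yr x t) has_real_derivative yrr r t) (at r)"
    and yt: "\<And>r t. a < r \<Longrightarrow> r < b \<Longrightarrow> 0 < t \<Longrightarrow> t \<le> \<tau> \<Longrightarrow>
      ((\<lambda>s. y r s) has_real_derivative yt r t) (at t)"
    and supersolution: "\<And>r t. a < r \<Longrightarrow> r < b \<Longrightarrow> 0 < t \<Longrightarrow> t \<le> \<tau> \<Longrightarrow> y r t < 0 \<Longrightarrow>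
      yrr r t + c r t * yr r t < yt r t"
    and rt: "a \<le> r" "r \<le> b" "0 \<le> t" "t \<le> \<tau>"
  shows "0 \<le> y r t"
proof -
  have "compact ({a..b} \<times> {0..\<tau>})" "{a..b} \<times> {0..\<tau>} \<noteq> {}"
    using rt by (auto intro: compact_Times)
  then obtain p where "p \<in> {a..b} \<times> {0..\<tau>}"
    and "\<And>q. q \<in> {a..b} \<times> {0..\<tau>} \<Longrightarrow> y (fst p) (snd p) \<le> y (fst q) (snd q)"
    using continuous_attains_inf[OF _ _ cont] by blast
  then obtain r0 t0 where r0: "a \<le> r0" "r0 \<le> b" and t0: "0 \<le> t0" "t0 \<le> \<tau>"
    and min: "\<And>r t. a \<le> r \<Longrightarrow> r \<le> b \<Longrightarrow> 0 \<le> t \<Longrightarrow> t \<le> \<tau> \<Longrightarrow> y r0 t0 \<le> y r t"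
    by (cases p) fastforce
  have "0 \<le> y r0 t0"
  proof (rule ccontr)
    assume neg: "\<not> 0 \<le> y r0 t0"
    with r0 t0 initial left right have interior: "a < r0" "r0 < b" "0 < t0"
      by (metis order_le_less)+
    have "yr r0 t0 = 0"
      by (rule DERIV_local_min[OF yr[OF interior t0(2)], of "min (r0 - a) (b - r0)"])
         (use interior t0 min in \<open>auto simp: abs_if split: if_splits\<close>)
    moreover have "0 \<le> yrr r0 t0"
      by (rule deriv2_nonneg_at_interior_min[OF yr yrr[OF interior t0(2)] interior(1,2)])
         (use interior t0 min in auto)
    moreover have "yt r0 t0 \<le> 0"
      by (rule deriv_nonpos_at_left_min[OF yt[OF interior t0(2)] interior(3)])
         (use r0 t0 min in auto)
    ultimately show False
      using supersolution[OF interior t0(2)] neg by simp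
  qed
  then show ?thesis
    using min[OF rt] by linarith
qed

lemma continuous_on_le_at_left_end:
  fixes f :: "real \<Rightarrow> real"
  assumes "continuous_on {a..b} f" "a < b" "\<And>t. a < t \<Longrightarrow> t \<le> b \<Longrightarrow> f t \<le> c"
  shows "f a \<le> c"
  by (rule continuous_le_on_closure[where S = "{a<..b}"]) (use assms in auto)

lemma ereal_less_if_le: "ereal \<tau> < T \<Longrightarrow> t \<le> \<tau> \<Longrightarrow> ereal t < T"
  by (meson ereal_less_eq(3) le_less_trans)

lemma abs_sin_double_div_le:
  fixes u r :: real
  shows "\<bar>sin (2 * u) / (2 * r^2)\<bar> \<le> \<bar>u\<bar> / r^2"
proof -
  have "\<bar>sin (2 * u)\<bar> \<le> 2 * \<bar>u\<bar>"
    using abs_sin_x_le_abs_x[of "2 * u"] by simp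
  then have "\<bar>sin (2 * u)\<bar> / (2 * r^2) \<le> 2 * \<bar>u\<bar> / (2 * r^2)"
    by (rule divide_right_mono) simp
  then show ?thesis
    by (simp add: abs_divide)
qed

lemma barrier_exponents:
  fixes \<alpha> \<tau> M :: real
  assumes "0 < \<alpha>" "0 < \<tau>" "0 \<le> M"
  obtains \<kappa> \<mu> where "1 \<le> \<kappa>" "\<kappa> \<le> \<mu> * \<tau>" "\<mu> = \<kappa> * (\<kappa> - 1 / \<alpha>) - M"
proof
  define \<kappa> where "\<kappa> = 1 / \<alpha> + 1 / \<tau> + M + 1"
  show "1 \<le> \<kappa>"
    using assms by (simp add: \<kappa>_def)
  have "\<kappa> * (\<kappa> - 1 / \<alpha>) - M = \<kappa> / \<tau> + (\<kappa> - 1) * (M + 1) + 1"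
    using assms by (simp add: \<kappa>_def field_simps)
  also have "\<dots> \<ge> \<kappa> / \<tau>"
    using \<open>1 \<le> \<kappa>\<close> assms by simp
  finally show "\<kappa> \<le> (\<kappa> * (\<kappa> - 1 / \<alpha>) - M) * \<tau>"
    using assms by (simp add: field_simps)
qed simp

definition barrier :: "real \<Rightarrow> real \<Rightarrow> real \<Rightarrow> real \<Rightarrow> real \<Rightarrow> real" where
  "barrier \<kappa> \<mu> \<tau> r t = exp (- \<kappa> * r + \<mu> * t) - exp (- \<kappa> + \<mu> * \<tau>)"

lemma barrier_less_exp: "barrier \<kappa> \<mu> \<tau> r t < exp (- \<kappa> * r + \<mu> * t)"
  by (simp add: barrier_def)

lemma barrier_on_parabolic_boundary:
  fixes \<kappa> \<mu> \<tau> \<delta> \<alpha> :: real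
  assumes "0 \<le> \<kappa>" "\<kappa> \<le> \<mu> * \<tau>" "0 \<le> \<mu>" "0 < \<delta>"
  defines "A \<equiv> \<delta> * exp (\<kappa> * \<alpha> - \<mu> * \<tau>)"
  shows barrier_initial: "0 \<le> r \<Longrightarrow> A * barrier \<kappa> \<mu> \<tau> r 0 \<le> 0"
    and barrier_inner: "t \<le> \<tau> \<Longrightarrow> A * barrier \<kappa> \<mu> \<tau> \<alpha> t < \<delta>"
    and barrier_outer: "t \<le> \<tau> \<Longrightarrow> A * barrier \<kappa> \<mu> \<tau> 1 t \<le> 0"
proof -
  have A: "0 < A"
    using assms(4) by (simp add: A_def)
  show "A * barrier \<kappa> \<mu> \<tau> r 0 \<le> 0" if "0 \<le> r"
  proof -
    have "- \<kappa> * r \<le> - \<kappa> + \<mu> * \<tau>"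
      using assms(1,2) mult_nonneg_nonneg[OF assms(1) that] by linarith
    then show ?thesis
      using A by (simp add: barrier_def mult_nonneg_nonpos)
  qed
  show "A * barrier \<kappa> \<mu> \<tau> \<alpha> t < \<delta>" if "t \<le> \<tau>"
  proof -
    have "barrier \<kappa> \<mu> \<tau> \<alpha> t < exp (- \<kappa> * \<alpha> + \<mu> * t)"
      by (rule barrier_less_exp)
    also have "\<dots> \<le> exp (- \<kappa> * \<alpha> + \<mu> * \<tau>)"
      using that assms(3) by (simp add: mult_left_mono)
    finally have "A * barrier \<kappa> \<mu> \<tau> \<alpha> t < A * exp (- \<kappa> * \<alpha> + \<mu> * \<tau>)"
      using A by simp
    also have "\<dots> = \<delta>"
      by (simp add: A_def flip: exp_add)
    finally show ?thesis .
  qed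
  show "A * barrier \<kappa> \<mu> \<tau> 1 t \<le> 0" if "t \<le> \<tau>"
    using A that assms(3) by (simp add: barrier_def mult_left_mono mult_nonneg_nonpos)
qed

lemma barrier_final_pos:
  assumes "0 < \<kappa>" "r < 1"
  shows "0 < barrier \<kappa> \<mu> \<tau> r \<tau>"
  using assms by (simp add: barrier_def)

lemma has_field_derivative_partial_fst:
  assumes "(g has_derivative (\<lambda>h. fst h * a + snd h * b)) (at (x, y))"
  shows "((\<lambda>s. g (s, y)) has_real_derivative a) (at x)"
proof -
  have "((\<lambda>s. (s, y)) has_derivative (\<lambda>h. (h, 0))) (at x)"
    by (auto intro!: derivative_eq_intros)
  from has_derivative_compose[OF this assms]
  show ?thesis
    unfolding has_field_derivative_def by (rule has_derivative_eq_rhs) (simp add: fun_eq_iff)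
qed

lemma has_field_derivative_partial_snd:
  assumes "(g has_derivative (\<lambda>h. fst h * a + snd h * b)) (at (x, y))"
  shows "((\<lambda>s. g (x, s)) has_real_derivative b) (at y)"
proof -
  have "((\<lambda>s. (x, s)) has_derivative (\<lambda>h. (0, h))) (at y)"
    by (auto intro!: derivative_eq_intros)
  from has_derivative_compose[OF this assms]
  show ?thesis
    unfolding has_field_derivative_def by (rule has_derivative_eq_rhs) (simp add: fun_eq_iff)
qed

lemma smooth_on2_partial_derivatives:
  assumes "smooth_on2 D \<phi>"
  obtains \<phi>r \<phi>rr \<phi>t where "continuous_on D (\<lambda>p. \<phi> (fst p) (snd p))"
    and "\<And>r t. (r, t) \<in> interior D \<Longrightarrow> ((\<lambda>x. \<phi> x t) has_real_derivative \<phi>r r t) (at r)"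
    and "\<And>r t. (r, t) \<in> interior D \<Longrightarrow> ((\<lambda>x. \<phi>r x t) has_real_derivative \<phi>rr r t) (at r)"
    and "\<And>r t. (r, t) \<in> interior D \<Longrightarrow> ((\<lambda>s. \<phi> r s) has_real_derivative \<phi>t r t) (at t)"
proof -
  obtain U g where DU: "D \<subseteq> U" and smooth: "smooth_open_on U g"
    and g: "\<And>p. p \<in> D \<Longrightarrow> g p = \<phi> (fst p) (snd p)"
    using assms unfolding smooth_on2_def by blast
  have Ck: "Ck_on k U g" for k
    using smooth by (simp add: smooth_open_on_def)
  obtain gx gy where dg: "\<forall>p\<in>U. (g has_derivative (\<lambda>h. fst h * gx p + snd h * gy p)) (at p)"
    and "Ck_on 1 U gx"
    using Ck[of 2] by (auto simp: numeral_2_eq_2)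
  then obtain gxx gxy where dgx: "\<forall>p\<in>U. (gx has_derivative (\<lambda>h. fst h * gxx p + snd h * gxy p)) (at p)"
    by auto
  show ?thesis
  proof (rule that[of "\<lambda>r t. gx (r, t)" "\<lambda>r t. gxx (r, t)" "\<lambda>r t. gy (r, t)"])
    have "continuous_on D g"
      by (rule continuous_on_subset[OF _ DU]) (use Ck[of 0] in simp)
    then show "continuous_on D (\<lambda>p. \<phi> (fst p) (snd p))"
      by (rule continuous_on_eq) (use g in auto)
    fix r t assume rt: "(r, t) \<in> interior D"
    then have "(r, t) \<in> U"
      using DU interior_subset by blast
    have slices_open: "open {x. (x, t) \<in> interior D}" "open {s. (r, s) \<in> interior D}"
      using continuous_open_vimage[OF open_interior, of "\<lambda>x. (x, t)"]
        continuous_open_vimage[OF open_interior, of "\<lambda>s. (r, s)"]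
      by (auto simp: vimage_def intro: continuous_intros)
    have g_eq: "g (x, s) = \<phi> x s" if "(x, s) \<in> interior D" for x s
      using g[of "(x, s)"] that interior_subset by auto
    show "((\<lambda>x. \<phi> x t) has_real_derivative gx (r, t)) (at r)"
      by (rule has_field_derivative_transform_within_open[OF
          has_field_derivative_partial_fst[OF bspec[OF dg \<open>(r, t) \<in> U\<close>]] slices_open(1)])
         (use rt g_eq in auto)
    show "((\<lambda>s. \<phi> r s) has_real_derivative gy (r, t)) (at t)"
      by (rule has_field_derivative_transform_within_open[OF
          has_field_derivative_partial_snd[OF bspec[OF dg \<open>(r, t) \<in> U\<close>]] slices_open(2)])
         (use rt g_eq in auto)
    show "((\<lambda>x. gx (x, t)) has_real_derivative gxx (r, t)) (at r)"
      by (rule has_field_derivative_partial_fst[OF bspec[OF dgx \<open>(r, t) \<in> U\<close>]])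
  qed
qed

lemma deriv_deriv_eqI:
  fixes f f' :: "real \<Rightarrow> real"
  assumes "open S" "x \<in> S"
    and "\<And>y. y \<in> S \<Longrightarrow> (f has_real_derivative f' y) (at y)"
    and "(f' has_real_derivative f'') (at x)"
  shows "deriv (\<lambda>y. deriv f y) x = f''"
proof -
  have "\<forall>\<^sub>F y in nhds x. deriv f y = f' y"
    using eventually_nhds_in_open[OF assms(1,2)]
    by eventually_elim (auto intro: DERIV_imp_deriv assms(3))
  then have "deriv (\<lambda>y. deriv f y) x = deriv f' x"
    by (rule deriv_cong_ev) simp
  also have "\<dots> = f''"
    by (rule DERIV_imp_deriv[OF assms(4)])
  finally show ?thesis .
qed

locale equivariant_flow =
  fixes T :: ereal and G Gr Grr Gt :: "real \<Rightarrow> real \<Rightarrow> real"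
  assumes continuous: "continuous_on ({0..1} \<times> {t. 0 \<le> t \<and> ereal t < T}) (\<lambda>p. G (fst p) (snd p))"
    and has_deriv_r: "\<And>r t. 0 < r \<Longrightarrow> r < 1 \<Longrightarrow> 0 < t \<Longrightarrow> ereal t < T \<Longrightarrow>
      ((\<lambda>x. G x t) has_real_derivative Gr r t) (at r)"
    and has_deriv_rr: "\<And>r t. 0 < r \<Longrightarrow> r < 1 \<Longrightarrow> 0 < t \<Longrightarrow> ereal t < T \<Longrightarrow>
      ((\<lambda>x. Gr x t) has_real_derivative Grr r t) (at r)"
    and has_deriv_t: "\<And>r t. 0 < r \<Longrightarrow> r < 1 \<Longrightarrow> 0 < t \<Longrightarrow> ereal t < T \<Longrightarrow>
      ((\<lambda>s. G r s) has_real_derivative Gt r t) (at t)"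
    and equation: "\<And>r t. 0 < r \<Longrightarrow> r < 1 \<Longrightarrow> 0 < t \<Longrightarrow> ereal t < T \<Longrightarrow>
      Gt r t + r * Gr r t = Grr r t + Gr r t / r - sin (2 * G r t) / (2 * r^2)"
begin

lemma uminus: "equivariant_flow T (\<lambda>r t. - G r t) (\<lambda>r t. - Gr r t) (\<lambda>r t. - Grr r t) (\<lambda>r t. - Gt r t)"
proof
  show "continuous_on ({0..1} \<times> {t. 0 \<le> t \<and> ereal t < T}) (\<lambda>p. - G (fst p) (snd p))"
    using continuous by (rule continuous_on_minus)
  fix r t :: real assume rt: "0 < r" "r < 1" "0 < t" "ereal t < T"
  show "((\<lambda>x. - G x t) has_real_derivative - Gr r t) (at r)"
    using has_deriv_r[OF rt] by (rule DERIV_minus)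
  show "((\<lambda>x. - Gr x t) has_real_derivative - Grr r t) (at r)"
    using has_deriv_rr[OF rt] by (rule DERIV_minus)
  show "((\<lambda>s. - G r s) has_real_derivative - Gt r t) (at t)"
    using has_deriv_t[OF rt] by (rule DERIV_minus)
  show "- Gt r t + r * - Gr r t = - Grr r t + - Gr r t / r - sin (2 * - G r t) / (2 * r^2)"
    using equation[OF rt] by simp
qed

lemma continuous_on_rectangle:
  assumes "ereal \<tau> < T"
  shows "continuous_on ({0..1} \<times> {0..\<tau>}) (\<lambda>p. G (fst p) (snd p))"
  by (rule continuous_on_subset[OF continuous]) (auto intro: ereal_less_if_le[OF assms])

lemma continuous_on_time_slice:
  assumes "ereal \<tau> < T" "0 \<le> r" "r \<le> 1"
  shows "continuous_on {0..\<tau>} (G r)"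
proof -
  have "continuous_on {0..\<tau>} (\<lambda>t. G (fst (r, t)) (snd (r, t)))"
    by (rule continuous_on_compose2[OF continuous_on_rectangle[OF assms(1)]])
       (use assms in \<open>auto intro!: continuous_intros\<close>)
  then show ?thesis
    by simp
qed

lemma reaction_term_bound:
  assumes "0 < \<alpha>" "\<alpha> \<le> r" "r < 1" "0 < t" "ereal t < T"
  shows "\<bar>Grr r t + (1 / r - r) * Gr r t - Gt r t\<bar> \<le> \<bar>pi - G r t\<bar> / \<alpha>^2"
proof -
  have rt: "0 < r" "r < 1" "0 < t" "ereal t < T"
    using assms by auto
  have "Grr r t + (1 / r - r) * Gr r t - Gt r t = sin (2 * G r t) / (2 * r^2)"
    using equation[OF rt] rt(1) by (simp add: field_simps)
  also have "sin (2 * G r t) = - sin (2 * (pi - G r t))"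
    by (simp add: right_diff_distrib sin_diff)
  finally have "\<bar>Grr r t + (1 / r - r) * Gr r t - Gt r t\<bar> = \<bar>sin (2 * (pi - G r t)) / (2 * r^2)\<bar>"
    by simp
  also have "\<dots> \<le> \<bar>pi - G r t\<bar> / r^2"
    by (rule abs_sin_double_div_le)
  also have "\<dots> \<le> \<bar>pi - G r t\<bar> / \<alpha>^2"
    using assms by (intro divide_left_mono power_mono) auto
  finally show ?thesis .
qed

lemma le_pi_away_from_origin:
  assumes \<alpha>: "0 < \<alpha>" and \<tau>: "ereal \<tau> < T"
    and initial: "\<And>r. \<alpha> \<le> r \<Longrightarrow> r \<le> 1 \<Longrightarrow> G r 0 \<le> pi"
    and inner: "\<And>t. 0 \<le> t \<Longrightarrow> t \<le> \<tau> \<Longrightarrow> G \<alpha> t \<le> pi"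
    and outer: "\<And>t. 0 \<le> t \<Longrightarrow> t \<le> \<tau> \<Longrightarrow> G 1 t \<le> pi"
    and rt: "\<alpha> \<le> r" "r \<le> 1" "0 \<le> t" "t \<le> \<tau>"
  shows "G r t \<le> pi"
proof -
  define K where "K = 1 / \<alpha>^2 + 1"
  let ?y = "\<lambda>r t. exp (- K * t) * (pi - G r t)"
  have "0 \<le> ?y r t"
  proof (rule parabolic_minimum_principle[where c = "\<lambda>r t. 1 / r - r", OF _ _ _ _ _ _ _ _ rt])
    have "{\<alpha>..1} \<times> {0..\<tau>} \<subseteq> {0..1} \<times> {0..\<tau>}" using \<alpha> by auto
    from continuous_on_subset[OF continuous_on_rectangle[OF \<tau>] this]
    show "continuous_on ({\<alpha>..1} \<times> {0..\<tau>}) (\<lambda>p. ?y (fst p) (snd p))"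
      by (auto intro!: continuous_intros)
    fix r t assume r: "\<alpha> < r" "r < 1" and t: "0 < t" "t \<le> \<tau>"
    then have rt: "0 < r" "r < 1" "0 < t" "ereal t < T"
      using \<alpha> ereal_less_if_le[OF \<tau>] by auto
    show "((\<lambda>x. ?y x t) has_real_derivative exp (- K * t) * - Gr r t) (at r)"
      using has_deriv_r[OF rt] by (auto intro!: derivative_eq_intros)
    show "((\<lambda>x. exp (- K * t) * - Gr x t) has_real_derivative exp (- K * t) * - Grr r t) (at r)"
      using has_deriv_rr[OF rt] by (auto intro!: derivative_eq_intros)
    show "((\<lambda>s. ?y r s) has_real_derivative exp (- K * t) * (- K * (pi - G r t) - Gt r t)) (at t)"
      using has_deriv_t[OF rt] by (auto intro!: derivative_eq_intros simp: algebra_simps)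
    assume "?y r t < 0"
    then have z: "pi - G r t < 0"
      by (simp add: mult_less_0_iff)
    then have "K * (pi - G r t) < - \<bar>pi - G r t\<bar> / \<alpha>^2"
      by (simp add: K_def abs_of_neg field_simps)
    also have "\<dots> \<le> Grr r t + (1 / r - r) * Gr r t - Gt r t"
      using reaction_term_bound[OF \<alpha> _ r(2) t(1) rt(4)] r by force
    finally have "0 < exp (- K * t) * (Grr r t + (1 / r - r) * Gr r t - Gt r t - K * (pi - G r t))"
      by simp
    then show "exp (- K * t) * - Grr r t + (1 / r - r) * (exp (- K * t) * - Gr r t)
        < exp (- K * t) * (- K * (pi - G r t) - Gt r t)"
      by (simp add: algebra_simps)
  qed (use initial inner outer in auto)
  then show ?thesis
    by (simp add: zero_le_mult_iff)
qed

lemma barrier_supersolution: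
  assumes \<alpha>: "0 < \<alpha>" "\<alpha> < r" and rt: "r < 1" "0 < t" "ereal t < T"
    and \<kappa>: "0 \<le> \<kappa>" and \<mu>: "\<mu> = \<kappa> * (\<kappa> - 1 / \<alpha>) - 1 / \<alpha>^2" and "0 < A"
    and u: "0 \<le> pi - G r t" "pi - G r t < A * exp (- \<kappa> * r + \<mu> * t)"
  shows "- Grr r t - A * \<kappa> * \<kappa> * exp (- \<kappa> * r + \<mu> * t)
      + (1 / r - r) * (- Gr r t + A * \<kappa> * exp (- \<kappa> * r + \<mu> * t))
    < - Gt r t - A * \<mu> * exp (- \<kappa> * r + \<mu> * t)"
proof -
  define E where "E = exp (- \<kappa> * r + \<mu> * t)"
  have "1 / r - r \<le> 1 / \<alpha>"
    using \<alpha> rt frac_le[of 1 1 \<alpha> r] by simp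
  then have "(1 / r - r) * \<kappa> \<le> 1 / \<alpha> * \<kappa>"
    using \<kappa> by (intro mult_right_mono) auto
  then have "\<mu> + (1 / r - r) * \<kappa> - \<kappa> * \<kappa> \<le> - (1 / \<alpha>^2)"
    using \<mu> by (simp add: algebra_simps)
  then have "A * E * (\<mu> + (1 / r - r) * \<kappa> - \<kappa> * \<kappa>) \<le> A * E * - (1 / \<alpha>^2)"
    using \<open>0 < A\<close> by (intro mult_left_mono) (auto simp: E_def)
  also have "\<dots> < (pi - G r t) * - (1 / \<alpha>^2)"
    using u(2) \<alpha> by (intro mult_strict_right_mono_neg) (auto simp: E_def)
  also have "\<dots> \<le> Grr r t + (1 / r - r) * Gr r t - Gt r t"
    using reaction_term_bound[OF \<alpha>(1) _ rt] \<alpha> u(1) by simp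
  finally show ?thesis
    unfolding E_def[symmetric] by (simp add: algebra_simps)
qed

lemma less_pi_away_from_origin:
  assumes \<alpha>: "0 < \<alpha>" and \<tau>: "0 < \<tau>" "ereal \<tau> < T" and \<delta>: "0 < \<delta>"
    and initial: "\<And>r. \<alpha> \<le> r \<Longrightarrow> r \<le> 1 \<Longrightarrow> G r 0 \<le> pi"
    and inner: "\<And>t. 0 \<le> t \<Longrightarrow> t \<le> \<tau> \<Longrightarrow> G \<alpha> t \<le> pi - \<delta>"
    and outer: "\<And>t. 0 \<le> t \<Longrightarrow> t \<le> \<tau> \<Longrightarrow> G 1 t \<le> pi"
    and r: "\<alpha> < r" "r < 1"
  shows "G r \<tau> < pi"
proof -
  have weak: "G \<rho> t \<le> pi" if "\<alpha> \<le> \<rho>" "\<rho> \<le> 1" "0 \<le> t" "t \<le> \<tau>" for \<rho> t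
  proof (rule le_pi_away_from_origin[OF \<alpha> \<tau>(2) initial _ outer that])
    show "G \<alpha> s \<le> pi" if "0 \<le> s" "s \<le> \<tau>" for s
      using inner[OF that] \<delta> by linarith
  qed
  obtain \<kappa> \<mu> where \<kappa>: "1 \<le> \<kappa>" and \<mu>: "\<kappa> \<le> \<mu> * \<tau>" "\<mu> = \<kappa> * (\<kappa> - 1 / \<alpha>) - 1 / \<alpha>^2"
    using barrier_exponents[OF \<alpha> \<tau>(1), of "1 / \<alpha>^2"] by auto
  have "0 \<le> \<mu>"
    using \<kappa> \<mu>(1) \<tau>(1) zero_less_mult_iff[of \<mu> \<tau>] by linarith
  define A where "A = \<delta> * exp (\<kappa> * \<alpha> - \<mu> * \<tau>)"
  have A: "0 < A"
    using \<delta> by (simp add: A_def)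
  note boundary = barrier_on_parabolic_boundary[where \<kappa> = \<kappa> and \<mu> = \<mu> and \<tau> = \<tau> and \<delta> = \<delta> and \<alpha> = \<alpha>,
      folded A_def]
  let ?v = "\<lambda>\<rho> t. pi - G \<rho> t - A * barrier \<kappa> \<mu> \<tau> \<rho> t"
  have "0 \<le> ?v r \<tau>"
  proof (rule parabolic_minimum_principle[where y = ?v and c = "\<lambda>\<rho> t. 1 / \<rho> - \<rho>"
        and a = \<alpha> and b = 1 and \<tau> = \<tau>])
    have "{\<alpha>..1} \<times> {0..\<tau>} \<subseteq> {0..1} \<times> {0..\<tau>}" using \<alpha> by auto
    from continuous_on_subset[OF continuous_on_rectangle[OF \<tau>(2)] this]
    show "continuous_on ({\<alpha>..1} \<times> {0..\<tau>}) (\<lambda>p. ?v (fst p) (snd p))"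
      unfolding barrier_def by (auto intro!: continuous_intros)
    show "0 \<le> ?v \<rho> 0" if "\<alpha> \<le> \<rho>" "\<rho> \<le> 1" for \<rho>
      using weak[of \<rho> 0] boundary(1)[where r = \<rho>] that \<alpha> \<kappa> \<mu>(1) \<open>0 \<le> \<mu>\<close> \<delta> \<tau>(1) by simp
    show "0 \<le> ?v \<alpha> t" if "0 \<le> t" "t \<le> \<tau>" for t
      using inner[OF that] boundary(2)[where t = t] that \<kappa> \<mu>(1) \<open>0 \<le> \<mu>\<close> \<delta> by simp
    show "0 \<le> ?v 1 t" if "0 \<le> t" "t \<le> \<tau>" for t
      using weak[of 1 t] boundary(3)[where t = t] that \<alpha> r \<kappa> \<mu>(1) \<open>0 \<le> \<mu>\<close> \<delta> by simp
    fix \<rho> t assume \<rho>: "\<alpha> < \<rho>" "\<rho> < 1" and t: "0 < t" "t \<le> \<tau>"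
    then have \<rho>t: "0 < \<rho>" "\<rho> < 1" "0 < t" "ereal t < T"
      using \<alpha> ereal_less_if_le[OF \<tau>(2)] by auto
    show "((\<lambda>x. ?v x t) has_real_derivative - Gr \<rho> t + A * \<kappa> * exp (- \<kappa> * \<rho> + \<mu> * t)) (at \<rho>)"
      using has_deriv_r[OF \<rho>t] unfolding barrier_def by (auto intro!: derivative_eq_intros)
    show "((\<lambda>x. - Gr x t + A * \<kappa> * exp (- \<kappa> * x + \<mu> * t)) has_real_derivative
        - Grr \<rho> t - A * \<kappa> * \<kappa> * exp (- \<kappa> * \<rho> + \<mu> * t)) (at \<rho>)"
      using has_deriv_rr[OF \<rho>t] by (auto intro!: derivative_eq_intros)
    show "((\<lambda>s. ?v \<rho> s) has_real_derivative - Gt \<rho> t - A * \<mu> * exp (- \<kappa> * \<rho> + \<mu> * t)) (at t)"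
      using has_deriv_t[OF \<rho>t] unfolding barrier_def by (auto intro!: derivative_eq_intros)
    assume "?v \<rho> t < 0"
    moreover have "A * barrier \<kappa> \<mu> \<tau> \<rho> t < A * exp (- \<kappa> * \<rho> + \<mu> * t)"
      using barrier_less_exp A by simp
    ultimately show "- Grr \<rho> t - A * \<kappa> * \<kappa> * exp (- \<kappa> * \<rho> + \<mu> * t)
        + (1 / \<rho> - \<rho>) * (- Gr \<rho> t + A * \<kappa> * exp (- \<kappa> * \<rho> + \<mu> * t))
      < - Gt \<rho> t - A * \<mu> * exp (- \<kappa> * \<rho> + \<mu> * t)"
      using barrier_supersolution[OF \<alpha> \<rho> t(1) \<rho>t(4) _ \<mu>(2) A] weak[of \<rho> t] \<rho> t \<kappa> by simp
  qed (use r \<tau> in auto)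
  moreover have "0 < A * barrier \<kappa> \<mu> \<tau> r \<tau>"
    using A barrier_final_pos[of \<kappa> r \<mu> \<tau>] \<kappa> r by simp
  ultimately show ?thesis
    by simp
qed

lemma small_near_origin:
  assumes origin: "\<And>t. 0 < t \<Longrightarrow> ereal t < T \<Longrightarrow> G 0 t = 0"
    and \<tau>: "0 < \<tau>" "ereal \<tau> < T" and "0 < \<delta>" "0 < \<epsilon>"
  obtains \<alpha> where "0 < \<alpha>" "\<alpha> < \<epsilon>" "\<And>t. 0 \<le> t \<Longrightarrow> t \<le> \<tau> \<Longrightarrow> G \<alpha> t \<le> \<delta>"
proof -
  have origin_le: "G 0 t \<le> 0" if "0 \<le> t" "t \<le> \<tau>" for t
  proof (cases "t = 0")
    case True
    show ?thesis
      unfolding True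
      by (rule continuous_on_le_at_left_end[OF continuous_on_time_slice[OF \<tau>(2)] \<tau>(1)])
         (auto simp: origin ereal_less_if_le[OF \<tau>(2)])
  qed (use that origin ereal_less_if_le[OF \<tau>(2)] in auto)
  have "uniformly_continuous_on ({0..1} \<times> {0..\<tau>}) (\<lambda>p. G (fst p) (snd p))"
    by (rule compact_uniformly_continuous[OF continuous_on_rectangle[OF \<tau>(2)]])
       (simp add: compact_Times)
  then obtain d where d: "0 < d" and close:
    "\<And>p q. p \<in> {0..1} \<times> {0..\<tau>} \<Longrightarrow> q \<in> {0..1} \<times> {0..\<tau>} \<Longrightarrow> dist q p < d \<Longrightarrow>
      dist (G (fst q) (snd q)) (G (fst p) (snd p)) < \<delta>"
    using \<open>0 < \<delta>\<close> unfolding uniformly_continuous_on_def by blast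
  define \<alpha> where "\<alpha> = min d (min \<epsilon> 1) / 2"
  have \<alpha>: "0 < \<alpha>" "\<alpha> < \<epsilon>" "\<alpha> < d" "\<alpha> \<le> 1"
    using d \<open>0 < \<epsilon>\<close> by (auto simp: \<alpha>_def min_def)
  show ?thesis
  proof (rule that[OF \<alpha>(1,2)])
    fix t assume t: "0 \<le> t" "t \<le> \<tau>"
    have "dist (G \<alpha> t) (G 0 t) < \<delta>"
      using close[of "(0, t)" "(\<alpha>, t)"] \<alpha> t by (simp add: dist_Pair_Pair dist_real_def)
    then show "G \<alpha> t \<le> \<delta>"
      using origin_le[OF t] by (simp add: dist_real_def)
  qed
qed

lemma less_pi:
  assumes origin: "\<And>t. 0 < t \<Longrightarrow> ereal t < T \<Longrightarrow> G 0 t = 0"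
    and outer: "\<And>t. 0 < t \<Longrightarrow> ereal t < T \<Longrightarrow> G 1 t \<le> pi"
    and initial: "\<And>r. 0 < r \<Longrightarrow> r < 1 \<Longrightarrow> G r 0 \<le> pi"
    and rt: "0 < r" "r < 1" "0 < t" "ereal t < T"
  shows "G r t < pi"
proof -
  obtain \<alpha> where \<alpha>: "0 < \<alpha>" "\<alpha> < r" and inner: "\<And>s. 0 \<le> s \<Longrightarrow> s \<le> t \<Longrightarrow> G \<alpha> s \<le> pi / 2"
    using small_near_origin[OF origin rt(3,4), of "pi / 2" r] rt(1) by auto
  have "G 1 0 \<le> pi"
    by (rule continuous_on_le_at_left_end[OF continuous_on_time_slice[OF rt(4)] rt(3)])
       (auto simp: outer ereal_less_if_le[OF rt(4)])
  show ?thesis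
  proof (rule less_pi_away_from_origin[OF \<alpha>(1) rt(3,4) pi_half_gt_zero _ _ _ \<alpha>(2) rt(2)])
    show "G \<rho> 0 \<le> pi" if "\<alpha> \<le> \<rho>" "\<rho> \<le> 1" for \<rho>
      using initial[of \<rho>] \<open>G 1 0 \<le> pi\<close> \<alpha> that by (cases "\<rho> = 1") auto
    show "G \<alpha> s \<le> pi - pi / 2" if "0 \<le> s" "s \<le> t" for s
      using inner[OF that] by simp
    show "G 1 s \<le> pi" if "0 \<le> s" "s \<le> t" for s
      using outer[of s] \<open>G 1 0 \<le> pi\<close> ereal_less_if_le[OF rt(4)] that by (cases "s = 0") auto
  qed
qed

lemma abs_less_pi:
  assumes "\<And>t. 0 < t \<Longrightarrow> ereal t < T \<Longrightarrow> G 0 t = 0"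
    and "\<And>t. 0 < t \<Longrightarrow> ereal t < T \<Longrightarrow> \<bar>G 1 t\<bar> \<le> pi"
    and "\<And>r. 0 < r \<Longrightarrow> r < 1 \<Longrightarrow> \<bar>G r 0\<bar> \<le> pi"
    and "0 < r" "r < 1" "0 < t" "ereal t < T"
  shows "\<bar>G r t\<bar> < pi"
proof -
  interpret neg: equivariant_flow T "\<lambda>r t. - G r t" "\<lambda>r t. - Gr r t" "\<lambda>r t. - Grr r t" "\<lambda>r t. - Gt r t"
    by (rule uminus)
  have "G r t < pi"
    by (rule less_pi) (use assms in \<open>auto simp: abs_le_iff\<close>)
  moreover have "- G r t < pi"
    by (rule neg.less_pi) (use assms in \<open>auto simp: abs_le_iff\<close>)
  ultimately show ?thesis
    by simp
qed

end

lemma equivariant_flow_if_smooth_solution: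
  fixes T :: ereal and \<phi> :: "real \<Rightarrow> real \<Rightarrow> real"
  assumes smooth: "smooth_on2 ({0..1} \<times> {t. 0 \<le> t \<and> ereal t < T}) \<phi>"
    and pde: "\<And>r t. 0 < r \<Longrightarrow> r < 1 \<Longrightarrow> 0 < t \<Longrightarrow> ereal t < T \<Longrightarrow>
       deriv (\<lambda>s. \<phi> r s) t + r * deriv (\<lambda>\<rho>. \<phi> \<rho> t) r
       = deriv (\<lambda>\<rho>. deriv (\<lambda>\<sigma>. \<phi> \<sigma> t) \<rho>) r + deriv (\<lambda>\<rho>. \<phi> \<rho> t) r / r
         - sin (2 * \<phi> r t) / (2 * r\<^sup>2)"
  obtains \<phi>r \<phi>rr \<phi>t where "equivariant_flow T \<phi> \<phi>r \<phi>rr \<phi>t"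
proof -
  define D where "D = {0..1::real} \<times> {t. 0 \<le> t \<and> ereal t < T}"
  obtain \<phi>r \<phi>rr \<phi>t where continuous: "continuous_on D (\<lambda>p. \<phi> (fst p) (snd p))"
    and \<phi>r: "\<And>r t. (r, t) \<in> interior D \<Longrightarrow> ((\<lambda>x. \<phi> x t) has_real_derivative \<phi>r r t) (at r)"
    and \<phi>rr: "\<And>r t. (r, t) \<in> interior D \<Longrightarrow> ((\<lambda>x. \<phi>r x t) has_real_derivative \<phi>rr r t) (at r)"
    and \<phi>t: "\<And>r t. (r, t) \<in> interior D \<Longrightarrow> ((\<lambda>s. \<phi> r s) has_real_derivative \<phi>t r t) (at t)"
    using smooth_on2_partial_derivatives[OF smooth[folded D_def]] by blast
  have in_interior: "(r, t) \<in> interior D" if "0 < r" "r < 1" "0 < t" "ereal t < T" for r t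
  proof -
    have "open ({0<..<1::real} \<times> {t. 0 < t \<and> ereal t < T})"
      unfolding Collect_conj_eq by (intro open_Times open_Int open_Collect_less continuous_intros)
    then have "{0<..<1} \<times> {t. 0 < t \<and> ereal t < T} \<subseteq> interior D"
      by (intro interior_maximal) (auto simp: D_def)
    then show ?thesis
      using that by auto
  qed
  have "equivariant_flow T \<phi> \<phi>r \<phi>rr \<phi>t"
  proof
    show "continuous_on ({0..1} \<times> {t. 0 \<le> t \<and> ereal t < T}) (\<lambda>p. \<phi> (fst p) (snd p))"
      using continuous by (simp add: D_def)
    fix r t :: real assume rt: "0 < r" "r < 1" "0 < t" "ereal t < T"
    show "((\<lambda>x. \<phi> x t) has_real_derivative \<phi>r r t) (at r)"
      by (rule \<phi>r[OF in_interior[OF rt]])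
    show "((\<lambda>x. \<phi>r x t) has_real_derivative \<phi>rr r t) (at r)"
      by (rule \<phi>rr[OF in_interior[OF rt]])
    show "((\<lambda>s. \<phi> r s) has_real_derivative \<phi>t r t) (at t)"
      by (rule \<phi>t[OF in_interior[OF rt]])
    have "deriv (\<lambda>\<rho>. deriv (\<lambda>\<sigma>. \<phi> \<sigma> t) \<rho>) r = \<phi>rr r t"
      by (rule deriv_deriv_eqI[of "{0<..<1}" r "\<lambda>\<sigma>. \<phi> \<sigma> t" "\<lambda>\<rho>. \<phi>r \<rho> t"])
         (use rt in \<open>auto intro: \<phi>r \<phi>rr in_interior\<close>)
    then show "\<phi>t r t + r * \<phi>r r t = \<phi>rr r t + \<phi>r r t / r - sin (2 * \<phi> r t) / (2 * r^2)"
      using pde[OF rt] DERIV_imp_deriv[OF \<phi>r[OF in_interior[OF rt]]]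
        DERIV_imp_deriv[OF \<phi>t[OF in_interior[OF rt]]]
      by simp
  qed
  then show ?thesis
    by (rule that)
qed

theorem lemma4p1:
  fixes T :: ereal and \<phi> :: "real \<Rightarrow> real \<Rightarrow> real" and \<phi>0 :: "real \<Rightarrow> real"
  assumes T_pos: "0 < T"
    and smooth: "smooth_on2 ({0..1} \<times> {t. 0 \<le> t \<and> ereal t < T}) \<phi>"
    and pde: "\<And>r t. 0 < r \<Longrightarrow> r < 1 \<Longrightarrow> 0 < t \<Longrightarrow> ereal t < T \<Longrightarrow>
       deriv (\<lambda>s. \<phi> r s) t + r * deriv (\<lambda>\<rho>. \<phi> \<rho> t) r
       = deriv (\<lambda>\<rho>. deriv (\<lambda>\<sigma>. \<phi> \<sigma> t) \<rho>) r + deriv (\<lambda>\<rho>. \<phi> \<rho> t) r / r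
         - sin (2 * \<phi> r t) / (2 * r\<^sup>2)"
    and init: "\<And>r. 0 < r \<Longrightarrow> r < 1 \<Longrightarrow> \<phi> r 0 = \<phi>0 r"
    and bdry0: "\<And>t. 0 < t \<Longrightarrow> ereal t < T \<Longrightarrow> \<phi> 0 t = 0"
    and bdry1: "\<And>t. 0 < t \<Longrightarrow> ereal t < T \<Longrightarrow> \<phi> 1 t = \<phi>0 1"
    and phi0_0: "\<phi>0 0 = 0"
    and phi0_bd: "\<And>r. 0 \<le> r \<Longrightarrow> r \<le> 1 \<Longrightarrow> - pi \<le> \<phi>0 r \<and> \<phi>0 r \<le> pi"
  shows "\<forall>r t. 0 < r \<and> r < 1 \<and> 0 < t \<and> ereal t < T \<longrightarrow> - pi < \<phi> r t \<and> \<phi> r t < pi"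
proof -
  obtain \<phi>r \<phi>rr \<phi>t where "equivariant_flow T \<phi> \<phi>r \<phi>rr \<phi>t"
    using equivariant_flow_if_smooth_solution[OF smooth pde] by blast
  then interpret equivariant_flow T \<phi> \<phi>r \<phi>rr \<phi>t .
  show ?thesis
  proof (intro allI impI)
    fix r t :: real assume "0 < r \<and> r < 1 \<and> 0 < t \<and> ereal t < T"
    then have "\<bar>\<phi> r t\<bar> < pi"
    proof (intro abs_less_pi[OF bdry0])
      show "\<bar>\<phi> 1 s\<bar> \<le> pi" if "0 < s" "ereal s < T" for s
        using bdry1[OF that] phi0_bd[of 1] by auto
      show "\<bar>\<phi> \<rho> 0\<bar> \<le> pi" if "0 < \<rho>" "\<rho> < 1" for \<rho>
        using init[OF that] phi0_bd[of \<rho>] that by auto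
    qed auto
    then show "- pi < \<phi> r t \<and> \<phi> r t < pi"
      by auto
  qed
qed

end
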